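(* Consider $n$ flows sharing a server that performs interleaved weighted round robin (IWRR) with positive integer weights $w_1,\dots,w_n$, and fix a flow of interest $f_i$. Then for every backlogged period $(s,t]$ of $f_i$ and every $j\neq i$, \[ \frac{D_i(s,t)}{w_i l_i^{\min}} \;\geq\; \frac{\big[D_j(s,t)-\big([w_j-w_i]^++1\big)l_j^{\max}\big]^+}{(w_j+w_i)\,l_j^{\max}}. \] That is, IWRR is a bandwidth-sharing policy for $f_i$ with weights $\phi_i''=w_i l_i^{\min}$, $\phi_j''=(w_j+w_i)l_j^{\max}$ ($j\neq i$) and penalty terms $H_{ij}''=([w_j-w_i]^++1)\,l_j^{\max}\,\mathbb{1}_{\{i\neq j\}}$.
   Context: Each flow $f_k$ sends packets with sizes in $[l_k^{\min},l_k^{\max}]$, $0<l_k^{\min}\le l_k^{\max}$, queued FIFO in a per-flow queue. IWRR: let $w_{\max}=\max_k w_k$. The server runs rounds forever; each round consists of cycles $c=1,\dots,w_{\max}$; in cycle $c$ the server visits flows $k=1,\dots,n$ in order and, if queue $k$ is nonempty and $c\le w_k$, transmits (non-preemptively) exactly one packet from the head of queue $k$. $D_k(t)$ is the cumulative data of flow $k$ that has left the server in $[0,t)$, $A_k(t)$ the cumulative arrivals, $D_k\le A_k$, $D_k(s,t):=D_k(t)-D_k(s)$. An interval $(s,t]$ is a backlogged period of $f_i$ if $D_i(\tau)<A_i(\tau)$ for all $\tau\in(s,t]$. $[x]^+:=\max\{x,0\}$. A server has a bandwidth-sharing policy if there exist weights $\phi_k>0$ and numbers $H_{ij}\ge0$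 such that for every backlogged period $(s,t]$ of $f_i$ and all $j\neq i$: $D_i(s,t)/\phi_i\ge[D_j(s,t)-H_{ij}]^+/\phi_j$. *)

theory Defs
  imports Main "HOL-Library.Extended_Nat"
begin

text \<open>
Flow k has npk k (possibly infinitely many) packets,
indexed in FIFO order m = 0,1,...; packet m of flow k has size sz k m and arrival time arr k m.
The IWRR server makes an infinite sequence of visits v = 0,1,2,...; visit v belongs to
round v div (n * wmax), cycle (v mod (n*wmax)) div n + 1, and visits flow v mod n.
Visit v happens at time vt v. At a visit the server transmits (non-preemptively) the head
packet of the visited queue iff the cycle number is at most the flow's weight and the queue
is nonempty; sent v records this, and the transmission occupies [vt v, et v].
\<close>

definition wmax :: "nat \<Rightarrow> (nat \<Rightarrow> nat) \<Rightarrow> nat" where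
  "wmax n w = Max (w ` {..<n})"

definition vflow :: "nat \<Rightarrow> nat \<Rightarrow> nat" where
  "vflow n v = v mod n"

definition vcycle :: "nat \<Rightarrow> (nat \<Rightarrow> nat) \<Rightarrow> nat \<Rightarrow> nat" where
  "vcycle n w v = (v mod (n * wmax n w)) div n + 1"

text \<open>number of packets of flow k transmitted at visits strictly before visit v
  (= index of the head packet of queue k at visit v)\<close>
definition nsent :: "nat \<Rightarrow> (nat \<Rightarrow> bool) \<Rightarrow> nat \<Rightarrow> nat \<Rightarrow> nat" where
  "nsent n sent k v = card {u. u < v \<and> sent u \<and> vflow n u = k}"

definition qnonempty :: "nat \<Rightarrow> (nat \<Rightarrow> enat) \<Rightarrow> (nat \<Rightarrow> nat \<Rightarrow> real) \<Rightarrow>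
    (nat \<Rightarrow> real) \<Rightarrow> (nat \<Rightarrow> bool) \<Rightarrow> nat \<Rightarrow> nat \<Rightarrow> bool" where
  "qnonempty n npk arr vt sent k v \<longleftrightarrow>
     (let h = nsent n sent k v in enat h < npk k \<and> arr k h \<le> vt v)"

definition iwrr_run :: "nat \<Rightarrow> (nat \<Rightarrow> nat) \<Rightarrow> (nat \<Rightarrow> enat) \<Rightarrow> (nat \<Rightarrow> nat \<Rightarrow> real) \<Rightarrow>
    (nat \<Rightarrow> real) \<Rightarrow> (nat \<Rightarrow> bool) \<Rightarrow> (nat \<Rightarrow> real) \<Rightarrow> bool" where
  "iwrr_run n w npk arr vt sent et \<longleftrightarrow>
     0 \<le> vt 0 \<and>
     (\<forall>v. sent v \<longleftrightarrow> vcycle n w v \<le> w (vflow n v) \<and> qnonempty n npk arr vt sent (vflow n v) v) \<and>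
     (\<forall>v. sent v \<longrightarrow> vt v \<le> et v \<and> et v \<le> vt (Suc v)) \<and>
     (\<forall>v. \<not> sent v \<longrightarrow> vt v \<le> vt (Suc v))"

definition Arr :: "(nat \<Rightarrow> enat) \<Rightarrow> (nat \<Rightarrow> nat \<Rightarrow> real) \<Rightarrow> (nat \<Rightarrow> nat \<Rightarrow> real) \<Rightarrow>
    nat \<Rightarrow> real \<Rightarrow> real" where
  "Arr npk arr sz k t = (\<Sum>m\<in>{m. enat m < npk k \<and> arr k m < t}. sz k m)"

text \<open>cumulative departures of flow k in [0,t): a packet leaves when its transmission ends\<close>
definition Dep :: "nat \<Rightarrow> (nat \<Rightarrow> nat \<Rightarrow> real) \<Rightarrow> (nat \<Rightarrow> bool) \<Rightarrow> (nat \<Rightarrow> real) \<Rightarrow>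
    nat \<Rightarrow> real \<Rightarrow> real" where
  "Dep n sz sent et k t =
     (\<Sum>v\<in>{v. sent v \<and> vflow n v = k \<and> et v < t}. sz k (nsent n sent k v))"

definition backlogged_period :: "(real \<Rightarrow> real) \<Rightarrow> (real \<Rightarrow> real) \<Rightarrow> real \<Rightarrow> real \<Rightarrow> bool" where
  "backlogged_period D A s t \<longleftrightarrow> s \<le> t \<and> (\<forall>\<tau>. s < \<tau> \<and> \<tau> \<le> t \<longrightarrow> D \<tau> < A \<tau>)"

end

theory Submission
  imports Defs
begin

text \<open>
Within a backlogged period of \<open>f\<^sub>i\<close>, every visit to queue \<open>i\<close> in a cycle numbered at most
\<open>w\<^sub>i\<close> transmits a packet: were the queue empty there, all arrived data of \<open>f\<^sub>i\<close> would have
departed before its next arrival, contradicting the backlog. So between the first and the last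
departure of \<open>f\<^sub>j\<close> in the period, \<open>f\<^sub>i\<close> is served at each of its eligible visits. Counting
eligible cycles of the periodic schedule gives
\<open>w\<^sub>i N\<^sub>j \<le> (w\<^sub>i + w\<^sub>j) N\<^sub>i + w\<^sub>i ([w\<^sub>j - w\<^sub>i]\<^sup>+ + 1)\<close> for the numbers of packets
\<open>N\<^sub>i, N\<^sub>j\<close> departing in the period, and the packet size bounds turn this into the claim.
\<close>

text \<open>Visit \<open>v\<close> lies in the global cycle \<open>v div n\<close>, which is cycle \<open>g mod W + 1\<close> of its round;
  a flow of weight \<open>w\<close> may transmit in global cycle \<open>g\<close> iff \<open>g mod W < w\<close>.\<close>

definition eligible_cycles :: "nat \<Rightarrow> nat \<Rightarrow> nat \<Rightarrow> nat \<Rightarrow> nat" where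
  "eligible_cycles W w x y = card {g. x \<le> g \<and> g < y \<and> g mod W < w}"

lemma eligible_cycles_split:
  assumes "x \<le> y" "y \<le> z"
  shows "eligible_cycles W w x z = eligible_cycles W w x y + eligible_cycles W w y z"
proof -
  have "{g. x \<le> g \<and> g < z \<and> g mod W < w}
      = {g. x \<le> g \<and> g < y \<and> g mod W < w} \<union> {g. y \<le> g \<and> g < z \<and> g mod W < w}"
    using assms by auto
  then show ?thesis
    unfolding eligible_cycles_def by (simp add: card_Un_disjoint disjoint_iff)
qed

lemma eligible_cycles_from_round:
  assumes "c \<le> W"
  shows "eligible_cycles W w (r * W) (r * W + c) = min w c"
  using assms
proof (induction c)
  case 0
  then show ?case by (simp add: eligible_cycles_def)
next
  case (Suc c)
  have "(r * W + c) mod W = c"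
    using Suc.prems by simp
  then have "{g. r * W + c \<le> g \<and> g < r * W + Suc c \<and> g mod W < w}
      = (if c < w then {r * W + c} else {})"
    by (auto simp: le_less_Suc_eq)
  then have "eligible_cycles W w (r * W + c) (r * W + Suc c) = (if c < w then 1 else 0)"
    by (simp add: eligible_cycles_def)
  then show ?case
    using Suc eligible_cycles_split[of "r * W" "r * W + c" "r * W + Suc c" W w] by auto
qed

lemma eligible_cycles_rounds:
  assumes "w \<le> W" "c \<le> W"
  shows "eligible_cycles W w 0 (r * W + c) = w * r + min w c"
  using assms(2)
proof (induction r arbitrary: c)
  case 0
  then show ?case using eligible_cycles_from_round[OF 0, where r = 0] by simp
next
  case (Suc r)
  have "eligible_cycles W w 0 (Suc r * W + c)
      = eligible_cycles W w 0 (r * W + W) + eligible_cycles W w (Suc r * W) (Suc r * W + c)"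
    using eligible_cycles_split[of 0 "Suc r * W" "Suc r * W + c" W w] by (simp add: add.commute)
  then show ?case
    using Suc.IH[of W] eligible_cycles_from_round[OF Suc.prems, where r = "Suc r"] assms(1) by simp
qed

lemma eligible_cycles_eq:
  assumes "w \<le> W" "c \<le> W" "c' \<le> W" "r * W + c \<le> r' * W + c'"
  shows "int (eligible_cycles W w (r * W + c) (r' * W + c'))
       = int w * (int r' - int r) + int (min w c') - int (min w c)"
proof -
  have "w * r + min w c + eligible_cycles W w (r * W + c) (r' * W + c') = w * r' + min w c'"
    using eligible_cycles_split[of 0 "r * W + c" "r' * W + c'" W w] assms(4)
      eligible_cycles_rounds[OF assms(1,2), of r] eligible_cycles_rounds[OF assms(1,3), of r']
    by simp
  then have "int (w * r + min w c + eligible_cycles W w (r * W + c) (r' * W + c'))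
      = int (w * r' + min w c')"
    by (rule arg_cong)
  then show ?thesis
    by (simp add: algebra_simps)
qed

text \<open>\<open>R\<close> rounds and the in-round positions \<open>ca, cb\<close> of two slots of a weight-\<open>wj\<close> flow
  determine both sides of the slot count in \<open>eligible_cycles_interleave\<close>.\<close>

lemma interleaving_inequality:
  fixes wi wj ca cb R :: int
  assumes wi: "0 < wi" and ca: "0 \<le> ca" "ca \<le> wj" and cb: "0 \<le> cb" "cb \<le> wj"
    and R: "0 \<le> R" "R = 0 \<longrightarrow> ca \<le> cb"
  shows "wi * (wj * R + cb + 1 - ca)
       \<le> (wi + wj) * (wi * R + min wi cb - min wi ca) + wi * (max 0 (wj - wi) + 1)"
proof -
  define ma mb where "ma = min wi ca" and "mb = min wi cb"
  \<comment> \<open>\<open>cb - ca\<close> is \<open>mb - ma\<close> plus excesses over \<open>wi\<close>, each in \<open>[0, [wj - wi]\<^sup>+]\<close>\<close>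
  have "wi * (cb - mb - (ca - ma)) \<le> wi * wi * R + wj * (mb - ma) + wi * max 0 (wj - wi)"
  proof (cases "ma \<le> mb")
    case True
    have "wi * (cb - mb - (ca - ma)) \<le> wi * max 0 (wj - wi)"
      using wi cb ca unfolding ma_def mb_def by (intro mult_left_mono) auto
    moreover have "0 \<le> wi * wi * R + wj * (mb - ma)"
      using True wi R ca by simp
    ultimately show ?thesis by linarith
  next
    case False
    then have "cb < wi" "cb < ca"
      unfolding ma_def mb_def by auto
    then have "1 \<le> R" "cb = mb"
      using R unfolding mb_def by auto
    have "wj * (ma - mb) \<le> wi * max wi wj"
    proof -
      have "ma - mb \<le> min wi wj"
        using wi ca cb unfolding ma_def mb_def by (auto simp: min_def)
      then have "wj * (ma - mb) \<le> wj * min wi wj"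
        using ca by (intro mult_left_mono) auto
      also have "\<dots> \<le> wi * max wi wj"
        using wi ca by (cases "wi \<le> wj") (auto intro: mult_mono)
      finally show ?thesis .
    qed
    moreover have "wi * wi \<le> wi * wi * R"
      using \<open>1 \<le> R\<close> wi by simp
    moreover have "0 \<le> wi * (ca - ma)"
      using wi unfolding ma_def by simp
    ultimately show ?thesis
      using \<open>cb = mb\<close> by (auto simp: algebra_simps max_def split: if_splits)
  qed
  then show ?thesis
    unfolding ma_def mb_def by (simp add: algebra_simps)
qed

lemma eligible_cycles_interleave:
  assumes wi: "0 < wi" "wi \<le> W" and wj: "wj \<le> W"
    and xy: "x \<le> y" "x mod W < wj" "y mod W < wj" and d: "d \<le> 1"
  shows "int wi * int (eligible_cycles W wj x (Suc y))
       \<le> (int wi + int wj) * int (eligible_cycles W wi (x + d) (y + d))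
         + int wi * (max 0 (int wj - int wi) + 1)"
proof -
  define rx cx ry cy where "rx = x div W" and "cx = x mod W" and "ry = y div W" and "cy = y mod W"
  define R where "R = int ry - int rx"
  have x: "x = rx * W + cx" and y: "y = ry * W + cy"
    unfolding rx_def cx_def ry_def cy_def by (metis div_mult_mod_eq)+
  have c: "cx < wj" "cy < wj"
    unfolding cx_def cy_def using xy(2,3) .
  have "rx \<le> ry"
    unfolding rx_def ry_def using xy(1) by (rule div_le_mono)
  moreover have "rx = ry \<longrightarrow> cx \<le> cy"
    using xy(1) x y by auto
  ultimately have "int wi * (int wj * R + int (cy + d) + 1 - int (cx + d))
      \<le> (int wi + int wj) * (int wi * R + min (int wi) (int (cy + d)) - min (int wi) (int (cx + d)))
        + int wi * (max 0 (int wj - int wi) + 1)"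
    by (intro interleaving_inequality) (use wi d c in \<open>auto simp: R_def\<close>)
  moreover have "int (eligible_cycles W wj (rx * W + cx) (ry * W + (cy + 1)))
      = int wj * R + int (cy + d) + 1 - int (cx + d)"
    using eligible_cycles_eq[OF wj, of cx "cy + 1" rx ry] xy(1) x y wj c by (simp add: R_def)
  moreover have "int (eligible_cycles W wi (rx * W + (cx + d)) (ry * W + (cy + d)))
      = int wi * R + min (int wi) (int (cy + d)) - min (int wi) (int (cx + d))"
    using eligible_cycles_eq[OF wi(2), of "cx + d" "cy + d" rx ry] xy(1) x y wj d c
    by (simp add: R_def of_nat_min)
  moreover have "x + d = rx * W + (cx + d)" "y + d = ry * W + (cy + d)" "Suc y = ry * W + (cy + 1)"
    using x y by simp_all
  ultimately show ?thesis
    using x by (simp only:)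
qed

lemma mult_add_less_mult_add_iff:
  fixes g h p q n :: nat
  assumes "p < n" "q < n"
  shows "g * n + p < h * n + q \<longleftrightarrow> g < h \<or> g = h \<and> p < q"
proof -
  have less: "a * n + r < b * n" if "a < b" "r < n" for a b r
  proof -
    have "a * n + r < Suc a * n" using that(2) by simp
    also have "\<dots> \<le> b * n" using that(1) by (intro mult_le_mono1) simp
    finally show ?thesis .
  qed
  show ?thesis
    using less[of g h p] less[of h g q] assms by (cases g h rule: linorder_cases) auto
qed

lemma card_residue_class:
  fixes k n :: nat
  assumes "k < n"
  shows "card {v. v mod n = k \<and> P (v div n)} = card {g. P g}"
proof -
  have "{v. v mod n = k \<and> P (v div n)} = (\<lambda>g. g * n + k) ` {g. P g}"
    using assms by (auto intro!: image_eqI[where x = "_ div n"])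
  moreover have "inj (\<lambda>g. g * n + k)"
    using assms by (auto intro!: injI)
  ultimately show ?thesis
    by (simp add: card_image inj_on_subset)
qed

lemma visits_interleave:
  fixes n W wi wj i j x y :: nat
  assumes i: "i < n" and j: "j < n" and ij: "i \<noteq> j"
    and wi: "0 < wi" "wi \<le> W" and wj: "wj \<le> W"
    and xy: "x \<le> y" "x mod W < wj" "y mod W < wj"
  shows "int wi * int (card {v. x * n + j \<le> v \<and> v \<le> y * n + j \<and> v mod n = j \<and> (v div n) mod W < wj})
       \<le> (int wi + int wj) * int (card {u. x * n + j < u \<and> u < y * n + j \<and> u mod n = i \<and> (u div n) mod W < wi})
         + int wi * (max 0 (int wj - int wi) + 1)"
proof -
  define d :: nat where "d = (if j < i then 0 else 1)"
  \<comment> \<open>the \<open>i\<close>-visits strictly between \<open>x * n + j\<close> and \<open>y * n + j\<close> lie in global cycles \<open>[x + d, y + d)\<close>\<close>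
  have "card {v. x * n + j \<le> v \<and> v \<le> y * n + j \<and> v mod n = j \<and> (v div n) mod W < wj}
      = card {v. v mod n = j \<and> (\<lambda>g. x \<le> g \<and> g < Suc y \<and> g mod W < wj) (v div n)}"
  proof -
    have "x * n + j \<le> v \<longleftrightarrow> x \<le> v div n" "v \<le> y * n + j \<longleftrightarrow> v div n < Suc y"
      if "v mod n = j" for v
      using div_mult_mod_eq[of v n] that j by (metis add_le_cancel_right less_Suc_eq_le mult_le_cancel2 not_gr0 not_less0)+
    then show ?thesis by meson
  qed
  moreover have "card {u. x * n + j < u \<and> u < y * n + j \<and> u mod n = i \<and> (u div n) mod W < wi}
      = card {u. u mod n = i \<and> (\<lambda>g. x + d \<le> g \<and> g < y + d \<and> g mod W < wi) (u div n)}"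
  proof -
    have "x * n + j < u \<longleftrightarrow> x + d \<le> u div n" "u < y * n + j \<longleftrightarrow> u div n < y + d"
      if "u mod n = i" for u
      using mult_add_less_mult_add_iff[OF j i, of x "u div n"] mult_add_less_mult_add_iff[OF i j, of "u div n" y]
        div_mult_mod_eq[of u n] that ij by (auto simp: d_def)
    then show ?thesis by meson
  qed
  moreover have "d \<le> 1"
    by (simp add: d_def)
  ultimately show ?thesis
    using eligible_cycles_interleave[OF wi wj xy, of d]
      card_residue_class[OF i, of "\<lambda>g. x + d \<le> g \<and> g < y + d \<and> g mod W < wi"]
      card_residue_class[OF j, of "\<lambda>g. x \<le> g \<and> g < Suc y \<and> g mod W < wj"]
    by (simp add: eligible_cycles_def)
qed

lemma exists_arrival_free_interval:
  fixes F :: "real set"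
  assumes "finite F" "x < t"
  obtains \<tau> where "x < \<tau>" "\<tau> \<le> t" "\<And>a. a \<in> F \<Longrightarrow> a < \<tau> \<Longrightarrow> a \<le> x"
proof
  define \<tau> where "\<tau> = Min (insert t {a \<in> F. x < a})"
  show "x < \<tau>" "\<tau> \<le> t"
    using assms by (auto simp: \<tau>_def)
  show "a \<le> x" if "a \<in> F" "a < \<tau>" for a
    using that assms by (cases "x < a") (auto simp: \<tau>_def)
qed

locale iwrr_system =
  fixes n :: nat and w :: "nat \<Rightarrow> nat" and npk :: "nat \<Rightarrow> enat"
    and arr sz :: "nat \<Rightarrow> nat \<Rightarrow> real" and lmin lmax :: "nat \<Rightarrow> real"
    and vt et :: "nat \<Rightarrow> real" and sent :: "nat \<Rightarrow> bool"
  assumes n_pos: "0 < n"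
    and w_pos: "\<forall>k<n. 0 < w k"
    and l_pos: "\<forall>k<n. 0 < lmin k \<and> lmin k \<le> lmax k"
    and sz_bounds: "\<forall>k<n. \<forall>m. enat m < npk k \<longrightarrow> lmin k \<le> sz k m \<and> sz k m \<le> lmax k"
    and arr_fifo: "\<forall>k<n. \<forall>m. enat (Suc m) < npk k \<longrightarrow> arr k m \<le> arr k (Suc m)"
    and arr_locfin: "\<forall>k<n. \<forall>\<tau>. finite {m. enat m < npk k \<and> arr k m < \<tau>}"
    and run: "iwrr_run n w npk arr vt sent et"
begin

abbreviation "W \<equiv> wmax n w"
abbreviation "NS \<equiv> nsent n sent"
abbreviation "D \<equiv> Dep n sz sent et"
abbreviation "A \<equiv> Arr npk arr sz"

definition departures :: "nat \<Rightarrow> real \<Rightarrow> real \<Rightarrow> nat set" where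
  "departures k s t = {v. sent v \<and> v mod n = k \<and> s \<le> et v \<and> et v < t}"

lemma le_wmax: "k < n \<Longrightarrow> w k \<le> W"
  unfolding wmax_def by (intro Max_ge) auto

lemma vcycle_le_iff: "vcycle n w v \<le> c \<longleftrightarrow> (v div n) mod W < c"
proof -
  have "v mod (n * W) = n * ((v div n) mod W) + v mod n"
    by (simp add: mod_mult2_eq)
  then have "(v mod (n * W)) div n = (v div n) mod W"
    using n_pos by simp
  then show ?thesis
    unfolding vcycle_def by auto
qed

lemma sent_iff: "sent v \<longleftrightarrow> (v div n) mod W < w (v mod n) \<and> qnonempty n npk arr vt sent (v mod n) v"
  using run unfolding iwrr_run_def vflow_def vcycle_le_iff by blast

lemma sent_transmission: "sent v \<Longrightarrow> vt v \<le> et v \<and> et v \<le> vt (Suc v)"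
  using run unfolding iwrr_run_def by blast

lemma vt_mono: "u \<le> v \<Longrightarrow> vt u \<le> vt v"
proof (induction v rule: dec_induct)
  case (step v)
  then show ?case
    using run unfolding iwrr_run_def by (metis order_trans)
qed simp

lemma sent_head:
  assumes "sent v" "v mod n = k"
  shows "enat (NS k v) < npk k" "arr k (NS k v) \<le> vt v"
  using assms sent_iff unfolding qnonempty_def Let_def by auto

lemma nsent_less:
  assumes "u < v" "sent u" "u mod n = k"
  shows "NS k u < NS k v"
proof -
  have "{x. x < u \<and> sent x \<and> vflow n x = k} \<subset> {x. x < v \<and> sent x \<and> vflow n x = k}"
    using assms by (auto simp: vflow_def)
  then show ?thesis
    unfolding nsent_def by (intro psubset_card_mono) auto
qed

lemma inj_on_nsent: "inj_on (NS k) {v. sent v \<and> v mod n = k}"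
proof (rule inj_onI)
  fix x y
  assume "x \<in> {v. sent v \<and> v mod n = k}" "y \<in> {v. sent v \<and> v mod n = k}" "NS k x = NS k y"
  then show "x = y"
    using nsent_less[of x y k] nsent_less[of y x k] by (cases x y rule: linorder_cases) auto
qed

lemma nsent_image: "NS k ` {x. x < u \<and> sent x \<and> x mod n = k} = {..<NS k u}"
proof -
  let ?P = "{x. x < u \<and> sent x \<and> x mod n = k}"
  have "NS k ` ?P \<subseteq> {..<NS k u}"
    using nsent_less by auto
  moreover have "card (NS k ` ?P) = card ?P"
    by (rule card_image, rule inj_on_subset[OF inj_on_nsent]) auto
  moreover have "card ?P = NS k u"
    unfolding nsent_def vflow_def by (simp add: conj_commute)
  ultimately show ?thesis
    using card_subset_eq[of "{..<NS k u}"] by auto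
qed

lemma arr_mono:
  assumes "k < n" "m \<le> m'" "enat m' < npk k"
  shows "arr k m \<le> arr k m'"
  using assms(2,3)
proof (induction m' rule: dec_induct)
  case (step m')
  then have "enat m' < npk k"
    by (meson Suc_ile_eq order.strict_implies_order)
  then show ?case
    using step arr_fifo assms(1) by (meson order_trans)
qed simp

lemma finite_sent_before:
  assumes "k < n"
  shows "finite {v. sent v \<and> v mod n = k \<and> et v < \<tau>}"
proof -
  let ?S = "{v. sent v \<and> v mod n = k \<and> et v < \<tau>}"
  have "NS k ` ?S \<subseteq> {m. enat m < npk k \<and> arr k m < \<tau>}"
    using sent_head sent_transmission by fastforce
  then have "finite (NS k ` ?S)"
    using arr_locfin assms by (meson finite_subset)
  then show ?thesis
    by (rule finite_imageD) (rule inj_on_subset[OF inj_on_nsent], auto)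
qed

lemma sz_sent:
  assumes "k < n" "sent v" "v mod n = k"
  shows "lmin k \<le> sz k (NS k v)" "sz k (NS k v) \<le> lmax k"
  using sz_bounds sent_head[OF assms(2,3)] assms(1) by auto

lemma Dep_eq_sum: "D k \<tau> = (\<Sum>v | sent v \<and> v mod n = k \<and> et v < \<tau>. sz k (NS k v))"
  unfolding Dep_def vflow_def by simp

lemma Dep_diff_eq_sum:
  assumes "k < n" "s \<le> t"
  shows "D k t - D k s = (\<Sum>v\<in>departures k s t. sz k (NS k v))"
proof -
  let ?B = "{v. sent v \<and> v mod n = k \<and> et v < t}" and ?A = "{v. sent v \<and> v mod n = k \<and> et v < s}"
  have "?A \<subseteq> ?B" "departures k s t = ?B - ?A"
    using assms by (auto simp: departures_def)
  then show ?thesis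
    unfolding Dep_eq_sum using finite_sent_before[OF assms(1)] by (simp add: sum.subset_diff)
qed

lemma sz_sent_nonneg:
  assumes "k < n" "sent v" "v mod n = k"
  shows "0 \<le> sz k (NS k v)"
  using sz_sent(1)[OF assms] l_pos assms(1) by fastforce

lemma finite_departures: "k < n \<Longrightarrow> finite (departures k s t)"
  unfolding departures_def by (rule finite_subset[OF _ finite_sent_before]) auto

lemma arrived_before_head:
  assumes "k < n" "\<not> qnonempty n npk arr vt sent k u" "enat m < npk k" "arr k m \<le> vt u"
  shows "m < NS k u"
proof (rule ccontr)
  assume "\<not> m < NS k u"
  then have "enat (NS k u) < npk k"
    using assms(3) by (metis enat_ord_simps(1) le_less_trans not_less)
  moreover have "arr k (NS k u) \<le> vt u"
    using assms(3,4) arr_mono[OF assms(1), of "NS k u" m] \<open>\<not> m < NS k u\<close> by simp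
  ultimately show False
    using assms(2) unfolding qnonempty_def Let_def by simp
qed

lemma Arr_le_Dep_if_queue_empty:
  assumes k: "k < n" and empty: "\<not> qnonempty n npk arr vt sent k u" and "vt u < \<tau>"
    and no_arrival: "\<And>m. enat m < npk k \<Longrightarrow> arr k m < \<tau> \<Longrightarrow> arr k m \<le> vt u"
  shows "A k \<tau> \<le> D k \<tau>"
proof -
  let ?P = "{x. x < u \<and> sent x \<and> x mod n = k}"
  have "A k \<tau> \<le> (\<Sum>m<NS k u. sz k m)"
    unfolding Arr_def
  proof (rule sum_mono2)
    show "{m. enat m < npk k \<and> arr k m < \<tau>} \<subseteq> {..<NS k u}"
      using arrived_before_head[OF k empty] no_arrival by auto
    show "0 \<le> sz k m" if "m \<in> {..<NS k u} - {m. enat m < npk k \<and> arr k m < \<tau>}" for m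
      using that sz_sent_nonneg[OF k] unfolding nsent_image[symmetric] by auto
  qed simp
  also have "\<dots> = (\<Sum>x\<in>?P. sz k (NS k x))"
    unfolding nsent_image[symmetric] by (rule sum.reindex_cong[OF inj_on_subset[OF inj_on_nsent]]) auto
  also have "\<dots> \<le> D k \<tau>"
    unfolding Dep_eq_sum
  proof (rule sum_mono2[OF finite_sent_before[OF k]])
    have "et x < \<tau>" if "x < u" "sent x" for x
      using sent_transmission[OF that(2)] vt_mono[of "Suc x" u] that(1) \<open>vt u < \<tau>\<close> by simp
    then show "?P \<subseteq> {v. sent v \<and> v mod n = k \<and> et v < \<tau>}"
      by auto
  qed (use sz_sent_nonneg[OF k] in auto)
  finally show ?thesis .
qed

lemma eligible_visit_sent:
  assumes k: "k < n" and bp: "backlogged_period (D k) (A k) s t"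
    and u: "s \<le> vt u" "vt u < t" "u mod n = k" "(u div n) mod W < w k"
  shows "sent u"
proof (rule ccontr)
  assume "\<not> sent u"
  then have empty: "\<not> qnonempty n npk arr vt sent k u"
    using sent_iff u by simp
  have "finite (arr k ` {m. enat m < npk k \<and> arr k m < t})"
    using arr_locfin k by simp
  then obtain \<tau> where \<tau>: "vt u < \<tau>" "\<tau> \<le> t"
    and no_arrival: "\<And>a. a \<in> arr k ` {m. enat m < npk k \<and> arr k m < t} \<Longrightarrow> a < \<tau> \<Longrightarrow> a \<le> vt u"
    using exists_arrival_free_interval u(2) by blast
  have "A k \<tau> \<le> D k \<tau>"
    using \<tau> no_arrival by (intro Arr_le_Dep_if_queue_empty[OF k empty]) auto
  moreover have "D k \<tau> < A k \<tau>"
    using bp \<tau> u(1) unfolding backlogged_period_def by auto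
  ultimately show False
    by simp
qed

lemma departures_between:
  assumes i: "i < n" and bp: "backlogged_period (D i) (A i) s t"
    and ab: "a \<in> departures j s t" "b \<in> departures j s t"
    and u: "a < u" "u < b" "u mod n = i" "(u div n) mod W < w i"
  shows "u \<in> departures i s t"
proof -
  have "s \<le> vt u"
    using ab(1) sent_transmission vt_mono[of "Suc a" u] u(1) unfolding departures_def by force
  moreover have "vt (Suc u) < t"
    using ab(2) sent_transmission vt_mono[of "Suc u" b] u(2) unfolding departures_def by force
  moreover have "sent u"
    using eligible_visit_sent[OF i bp \<open>s \<le> vt u\<close> _ u(3,4)] \<open>vt (Suc u) < t\<close> vt_mono[of u "Suc u"]
    by simp
  ultimately show ?thesis
    using sent_transmission[of u] u(3) unfolding departures_def by force
qed

lemma departures_count_bound: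
  assumes i: "i < n" and j: "j < n" and ij: "i \<noteq> j"
    and bp: "backlogged_period (D i) (A i) s t"
  shows "int (w i) * int (card (departures j s t))
       \<le> (int (w i) + int (w j)) * int (card (departures i s t))
         + int (w i) * (max 0 (int (w j) - int (w i)) + 1)"
proof (cases "departures j s t = {}")
  case False
  have fin: "finite (departures j s t)"
    using finite_departures[OF j] .
  define a b where "a = Min (departures j s t)" and "b = Max (departures j s t)"
  define x y where "x = a div n" and "y = b div n"
  have ab: "a \<in> departures j s t" "b \<in> departures j s t"
    using False fin by (simp_all add: a_def b_def)
  have bounds: "a \<le> v" "v \<le> b" if "v \<in> departures j s t" for v
    using fin that by (simp_all add: a_def b_def)
  have mod_ab: "a mod n = j" "b mod n = j"
    using ab unfolding departures_def by auto
  then have a: "a = x * n + j" and b: "b = y * n + j"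
    unfolding x_def y_def by (metis div_mult_mod_eq)+
  have xy: "x \<le> y" "x mod W < w j" "y mod W < w j"
    using bounds(2)[OF ab(1)] ab sent_iff mod_ab unfolding departures_def x_def y_def
    by (auto intro: div_le_mono)
  let ?Ej = "{v. x * n + j \<le> v \<and> v \<le> y * n + j \<and> v mod n = j \<and> (v div n) mod W < w j}"
  let ?Ei = "{u. x * n + j < u \<and> u < y * n + j \<and> u mod n = i \<and> (u div n) mod W < w i}"
  have "departures j s t \<subseteq> ?Ej"
    using bounds sent_iff a b unfolding departures_def by auto
  then have "card (departures j s t) \<le> card ?Ej"
    by (intro card_mono) (auto intro: finite_subset[of _ "{..y * n + j}"])
  then have "int (w i) * int (card (departures j s t)) \<le> int (w i) * int (card ?Ej)"
    by (simp add: mult_left_mono)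
  also have "\<dots> \<le> (int (w i) + int (w j)) * int (card ?Ei) + int (w i) * (max 0 (int (w j) - int (w i)) + 1)"
    using visits_interleave[OF i j ij _ le_wmax[OF i] le_wmax[OF j] xy] w_pos i by simp
  also have "\<dots> \<le> (int (w i) + int (w j)) * int (card (departures i s t))
      + int (w i) * (max 0 (int (w j) - int (w i)) + 1)"
  proof -
    have "?Ei \<subseteq> departures i s t"
      using departures_between[OF i bp ab] a b by auto
    then have "card ?Ei \<le> card (departures i s t)"
      by (intro card_mono finite_departures[OF i])
    then show ?thesis
      by (simp add: mult_left_mono)
  qed
  finally show ?thesis .
qed simp

lemma Dep_diff_ge:
  assumes "k < n" "s \<le> t"
  shows "real (card (departures k s t)) * lmin k \<le> D k t - D k s"
  unfolding Dep_diff_eq_sum[OF assms] using sum_bounded_below[of "departures k s t" "lmin k"]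
    sz_sent(1)[OF assms(1)] unfolding departures_def by auto

lemma Dep_diff_le:
  assumes "k < n" "s \<le> t"
  shows "D k t - D k s \<le> real (card (departures k s t)) * lmax k"
  unfolding Dep_diff_eq_sum[OF assms] using sum_bounded_above[of "departures k s t" _ "lmax k"]
    sz_sent(2)[OF assms(1)] unfolding departures_def by auto

end

lemma bandwidth_share_of_counts:
  fixes X Y Ni Nj wi wj li lj H :: real
  assumes pos: "0 < wi" "0 < wj" "0 < li" "0 < lj" "0 \<le> Ni"
    and X: "Ni * li \<le> X" and Y: "Y \<le> Nj * lj"
    and count: "wi * Nj \<le> (wi + wj) * Ni + wi * H"
  shows "max 0 (Y - H * lj) / ((wj + wi) * lj) \<le> X / (wi * li)"
proof (cases "Y - H * lj \<le> 0")
  case True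
  have "0 \<le> X"
    using X pos mult_nonneg_nonneg[of Ni li] by linarith
  then show ?thesis
    using True pos by simp
next
  case False
  have "max 0 (Y - H * lj) / ((wj + wi) * lj) = (Y - H * lj) / ((wj + wi) * lj)"
    using False by simp
  also have "\<dots> \<le> (Nj - H) * lj / ((wj + wi) * lj)"
    using Y pos by (intro divide_right_mono) (simp_all add: algebra_simps)
  also have "\<dots> = (Nj - H) / (wj + wi)"
    using pos by simp
  also have "\<dots> \<le> Ni / wi"
    using count pos by (simp add: field_simps)
  also have "\<dots> = Ni * li / (wi * li)"
    using pos by simp
  also have "\<dots> \<le> X / (wi * li)"
    using X pos by (intro divide_right_mono) auto
  finally show ?thesis .
qed

theorem mainTheorem3:
  fixes n :: nat and w :: "nat \<Rightarrow> nat" and npk :: "nat \<Rightarrow> enat"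
    and arr sz :: "nat \<Rightarrow> nat \<Rightarrow> real" and lmin lmax :: "nat \<Rightarrow> real"
    and vt et :: "nat \<Rightarrow> real" and sent :: "nat \<Rightarrow> bool"
    and i j :: nat and s t :: real
  assumes w_pos: "\<forall>k<n. 0 < w k"
    and l_pos: "\<forall>k<n. 0 < lmin k \<and> lmin k \<le> lmax k"
    and sz_bounds: "\<forall>k<n. \<forall>m. enat m < npk k \<longrightarrow> lmin k \<le> sz k m \<and> sz k m \<le> lmax k"
    and arr_nonneg: "\<forall>k<n. \<forall>m. enat m < npk k \<longrightarrow> 0 \<le> arr k m"
    and arr_fifo: "\<forall>k<n. \<forall>m. enat (Suc m) < npk k \<longrightarrow> arr k m \<le> arr k (Suc m)"
    and arr_locfin: "\<forall>k<n. \<forall>\<tau>. finite {m. enat m < npk k \<and> arr k m < \<tau>}"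
    and run: "iwrr_run n w npk arr vt sent et"
    and i: "i < n" and j: "j < n" and ij: "j \<noteq> i"
    and bp: "backlogged_period (Dep n sz sent et i) (Arr npk arr sz i) s t"
  shows "(Dep n sz sent et i t - Dep n sz sent et i s) / (real (w i) * lmin i)
         \<ge> max 0 (Dep n sz sent et j t - Dep n sz sent et j s
                   - (max 0 (real (w j) - real (w i)) + 1) * lmax j)
           / ((real (w j) + real (w i)) * lmax j)"
proof -
  interpret iwrr_system n w npk arr sz lmin lmax vt et sent
    using assms by unfold_locales auto
  have "s \<le> t"
    using bp unfolding backlogged_period_def by simp
  have count: "of_int (int (w i) * int (card (departures j s t)))
      \<le> (of_int ((int (w i) + int (w j)) * int (card (departures i s t))
          + int (w i) * (max 0 (int (w j) - int (w i)) + 1)) :: real)"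
    using departures_count_bound[OF i j ij[symmetric] bp] by (simp only: of_int_le_iff)
  show ?thesis
    using bandwidth_share_of_counts[OF _ _ _ _ _ Dep_diff_ge[OF i \<open>s \<le> t\<close>] Dep_diff_le[OF j \<open>s \<le> t\<close>]]
      count w_pos l_pos i j by (auto simp: of_int_max intro: less_le_trans)
qed

end
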